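(* Let $n\ge 1$ and $m\ge 1$ be integers and let $H_m(\mathbb B)$ be the analytic functional Hilbert space on the open unit ball $\mathbb B\subset\mathbb C^n$ with reproducing kernel $K_m(z,w)=(1-\langle z,w\rangle)^{-m}$. Let $r\in\mathbb N$ and let $T\in L(H_m(\mathbb B))$ be homogeneous of degree $r$ (i.e. $T\mathbb H_j\subset\mathbb H_{j+r}$ for all $j\ge 0$) and satisfy \[ M^{\prime *}_zTM^\prime_z = P_{{\rm Im}M^*_z}\Big(\oplus \sum^{m-1}_{j=0}(-1)^j\binom{m}{j+1}\sigma^j_{M_z}(T)\Big)P_{{\rm Im}M^*_z}. \] Then $Tf=(T1)f$ for all $f\in H_m(\mathbb B)$.
   Context: $H_m(\mathbb B)=\{f=\sum_{\alpha\in\mathbb N^n}f_\alpha z^\alpha\in\mathcal O(\mathbb B):\ \|f\|^2=\sum_\alpha |f_\alpha|^2/\rho_m(\alpha)<\infty\}$ with $\rho_m(\alpha)=\frac{(m+|\alpha|-1)!}{\alpha!(m-1)!}$. Let $\mathbb H_k$ denote the space of homogeneous polynomials of degree $k$, so $H_m(\mathbb B)$ is the orthogonal sum of the $\mathbb H_k$, and every $f$ has homogeneous expansion $f=\sum_k f_k$, $f_k\in\mathbb H_k$. $M_z:H_m(\mathbb B)^n\to H_m(\mathbb B)$, $(f_i)\mapsto\sum_i z_if_i$, is the row multiplication operator (it has closed range), $M_z^*:H_m(\mathbb B)\to H_m(\mathbb B)^n$, $f\mapsto (M_{z_i}^*f)_i$, is its adjoint, and $P_{{\rm Im}M_z^*}$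 is the orthogonal projection of $H_m(\mathbb B)^n$ onto the closed range of $M_z^*$. Let $\delta\in L(H_m(\mathbb B))$ be the diagonal operator $\delta(\sum_k f_k)=f_0+\sum_{k\ge1}\frac{m+k-1}{k}f_k$, and define $M_z'=\delta M_z:H_m(\mathbb B)^n\to H_m(\mathbb B)$, with adjoint $M_z'^*$. For $X\in L(H_m(\mathbb B))$, $\sigma_{M_z}(X)=\sum_{i=1}^n M_{z_i}XM_{z_i}^*$, $\sigma^j_{M_z}$ is its $j$-th iterate ($\sigma^0_{M_z}(X)=X$), and $\oplus X$ denotes $X\oplus\cdots\oplus X$ ($n$ copies) on $H_m(\mathbb B)^n$. *)

theory Defs
  imports "HOL-Analysis.Analysis" "HOL-Library.Function_Algebras"
begin

text \<open>The index type 'n (finite)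
  plays the role of {1..n}; a multi-index alpha in N^n is a function 'n => nat, and a
  holomorphic function f = sum f_alpha z^alpha is represented by its Taylor coefficient
  family alpha |-> f_alpha.\<close>

type_synonym 'n mindex = "'n \<Rightarrow> nat"
type_synonym 'n coeffs = "'n mindex \<Rightarrow> complex"

definition mabs :: "'n::finite mindex \<Rightarrow> nat" where
  "mabs \<alpha> = (\<Sum>i\<in>UNIV. \<alpha> i)"

definition mfact :: "'n::finite mindex \<Rightarrow> nat" where
  "mfact \<alpha> = (\<Prod>i\<in>UNIV. fact (\<alpha> i))"

definition rho :: "nat \<Rightarrow> 'n::finite mindex \<Rightarrow> real" where
  "rho m \<alpha> = fact (m + mabs \<alpha> - 1) / (real (mfact \<alpha>) * fact (m - 1))"

definition Hm :: "nat \<Rightarrow> ('n::finite coeffs) set" where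
  "Hm m = {f. (\<lambda>\<alpha>. (cmod (f \<alpha>))\<^sup>2 / rho m \<alpha>) summable_on UNIV}"

definition ipH :: "nat \<Rightarrow> 'n::finite coeffs \<Rightarrow> 'n coeffs \<Rightarrow> complex" where
  "ipH m f g = (\<Sum>\<^sub>\<infinity>\<alpha>. f \<alpha> * cnj (g \<alpha>) / complex_of_real (rho m \<alpha>))"

definition normH :: "nat \<Rightarrow> 'n::finite coeffs \<Rightarrow> real" where
  "normH m f = sqrt (\<Sum>\<^sub>\<infinity>\<alpha>. (cmod (f \<alpha>))\<^sup>2 / rho m \<alpha>)"

definition Hhom :: "nat \<Rightarrow> nat \<Rightarrow> ('n::finite coeffs) set" where
  "Hhom m k = {f \<in> Hm m. \<forall>\<alpha>. mabs \<alpha> \<noteq> k \<longrightarrow> f \<alpha> = 0}"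

definition bounded_op :: "nat \<Rightarrow> ('n::finite coeffs \<Rightarrow> 'n coeffs) \<Rightarrow> bool" where
  "bounded_op m T \<longleftrightarrow>
     (\<forall>f\<in>Hm m. T f \<in> Hm m) \<and>
     (\<forall>f\<in>Hm m. \<forall>g\<in>Hm m. T (f + g) = T f + T g) \<and>
     (\<forall>f\<in>Hm m. \<forall>c. T (\<lambda>\<alpha>. c * f \<alpha>) = (\<lambda>\<alpha>. c * T f \<alpha>)) \<and>
     (\<exists>C. \<forall>f\<in>Hm m. normH m (T f) \<le> C * normH m f)"

definition adj :: "'a set \<Rightarrow> ('a \<Rightarrow> 'a \<Rightarrow> complex) \<Rightarrow> 'b::zero set \<Rightarrow> ('b \<Rightarrow> 'b \<Rightarrow> complex)
                   \<Rightarrow> ('a \<Rightarrow> 'b) \<Rightarrow> ('b \<Rightarrow> 'a::zero)" where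
  "adj A ia B ib T = (THE S. (\<forall>y. y \<notin> B \<longrightarrow> S y = 0) \<and> (\<forall>y\<in>B. S y \<in> A) \<and>
                           (\<forall>x\<in>A. \<forall>y\<in>B. ib (T x) y = ia x (S y)))"

definition hclosure :: "'a::minus set \<Rightarrow> ('a \<Rightarrow> 'a \<Rightarrow> complex) \<Rightarrow> 'a set \<Rightarrow> 'a set" where
  "hclosure A ia V = {y \<in> A. \<forall>e>0. \<exists>v\<in>V. sqrt (Re (ia (y - v) (y - v))) < e}"

definition orth_proj :: "('a::minus \<Rightarrow> 'a \<Rightarrow> complex) \<Rightarrow> 'a set \<Rightarrow> 'a \<Rightarrow> 'a" where
  "orth_proj ia V x = (THE y. y \<in> V \<and> (\<forall>v\<in>V. ia (x - y) v = 0))"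

definition Hn :: "nat \<Rightarrow> ('n::finite \<Rightarrow> 'n coeffs) set" where
  "Hn m = {F. \<forall>i. F i \<in> Hm m}"

definition ipHn :: "nat \<Rightarrow> ('n::finite \<Rightarrow> 'n coeffs) \<Rightarrow> ('n \<Rightarrow> 'n coeffs) \<Rightarrow> complex" where
  "ipHn m F G = (\<Sum>i\<in>UNIV. ipH m (F i) (G i))"

definition Mzi :: "'n::finite \<Rightarrow> 'n coeffs \<Rightarrow> 'n coeffs" where
  "Mzi i f = (\<lambda>\<alpha>. if \<alpha> i = 0 then 0 else f (\<alpha>(i := \<alpha> i - 1)))"

definition Mzi_adj :: "nat \<Rightarrow> 'n::finite \<Rightarrow> 'n coeffs \<Rightarrow> 'n coeffs" where
  "Mzi_adj m i = adj (Hm m) (ipH m) (Hm m) (ipH m) (Mzi i)"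

definition Mz :: "('n::finite \<Rightarrow> 'n coeffs) \<Rightarrow> 'n coeffs" where
  "Mz F = (\<Sum>i\<in>UNIV. Mzi i (F i))"

definition Mz_adj :: "nat \<Rightarrow> 'n::finite coeffs \<Rightarrow> ('n \<Rightarrow> 'n coeffs)" where
  "Mz_adj m = adj (Hn m) (ipHn m) (Hm m) (ipH m) Mz"

definition P_ImMz_adj :: "nat \<Rightarrow> ('n::finite \<Rightarrow> 'n coeffs) \<Rightarrow> ('n \<Rightarrow> 'n coeffs)" where
  "P_ImMz_adj m = orth_proj (ipHn m) (hclosure (Hn m) (ipHn m) (Mz_adj m ` Hm m))"

definition delta :: "nat \<Rightarrow> 'n::finite coeffs \<Rightarrow> 'n coeffs" where
  "delta m f = (\<lambda>\<alpha>. (if mabs \<alpha> = 0 then 1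
                      else complex_of_real (real (m + mabs \<alpha> - 1) / real (mabs \<alpha>))) * f \<alpha>)"

definition Mz' :: "nat \<Rightarrow> ('n::finite \<Rightarrow> 'n coeffs) \<Rightarrow> 'n coeffs" where
  "Mz' m F = delta m (Mz F)"

definition Mz'_adj :: "nat \<Rightarrow> 'n::finite coeffs \<Rightarrow> ('n \<Rightarrow> 'n coeffs)" where
  "Mz'_adj m = adj (Hn m) (ipHn m) (Hm m) (ipH m) (Mz' m)"

definition sigma :: "nat \<Rightarrow> ('n::finite coeffs \<Rightarrow> 'n coeffs) \<Rightarrow> ('n coeffs \<Rightarrow> 'n coeffs)" where
  "sigma m X = (\<lambda>f. \<Sum>i\<in>UNIV. Mzi i (X (Mzi_adj m i f)))"

definition oplus_op :: "('n::finite coeffs \<Rightarrow> 'n coeffs) \<Rightarrow> ('n \<Rightarrow> 'n coeffs) \<Rightarrow> ('n \<Rightarrow> 'n coeffs)" where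
  "oplus_op X = (\<lambda>F i. X (F i))"

definition one_fun :: "'n::finite coeffs" where
  "one_fun = (\<lambda>\<alpha>. if \<alpha> = (\<lambda>_. 0) then 1 else 0)"

definition fmult :: "'n::finite coeffs \<Rightarrow> 'n coeffs \<Rightarrow> 'n coeffs" where
  "fmult a b = (\<lambda>\<alpha>. \<Sum>\<beta>\<in>{\<beta>. \<beta> \<le> \<alpha>}. a \<beta> * b (\<alpha> - \<beta>))"

end

theory Submission
  imports Defs "HOL-Computational_Algebra.Formal_Power_Series"
begin

text \<open>
  Write phi = T 1. Testing the hypothesis on F = M_z^* g for a homogeneous polynomial g of
  degree d > 0 -- both projections fix F, and M_z' F = g because delta inverts M_z M_z^* off the
  constants -- gives T g = M_z (X (+) ... (+) X) M_z^* g with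
  X = sum_{j<m} (-1)^j C(m, j+1) sigma^j(T).  If T is multiplication by phi in all degrees
  below d, then sigma^j(T) acts on degree d - 1 as multiplication by phi times a weight
  lambda_j(d - 1), because sum_i M_{z_i} M_{z_i}^* is e / (m + e - 1) on degree e.  Hence
  T g = (sum_{j<m} (-1)^j C(m, j+1) lambda_{j+1}(d)) phi g, and the coefficient is 1 by a
  Vandermonde identity.  So T = phi on polynomials by induction on the degree; since T is bounded
  and homogeneous, (T f)_alpha only sees one homogeneous part of f, which extends this to H_m.
\<close>

section \<open>Alternating binomial sums\<close>

text \<open>lambda_j(d): the factor by which sigma^j turns multiplication by phi on degree d into itself.\<close>
fun sigma_weight :: "nat \<Rightarrow> nat \<Rightarrow> nat \<Rightarrow> real" where
  "sigma_weight m 0 d = 1"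
| "sigma_weight m (Suc j) d = sigma_weight m j (d - 1) * real d / real (m + d - 1)"

lemma sigma_weight_binomial:
  assumes "m \<ge> 1"
  shows "sigma_weight m l d * real ((m + d - 1) choose l) = real (d choose l)"
proof (induction l arbitrary: d)
  case 0
  then show ?case by simp
next
  case (Suc l)
  show ?case
  proof (cases d)
    case 0
    then show ?thesis by simp
  next
    case (Suc e)
    have top: "m + d - 1 = Suc (m + e - 1)"
      using Suc assms by simp
    have top_binomial: "real (Suc (m + e - 1)) * real ((m + e - 1) choose l)
        = real (Suc (m + e - 1) choose Suc l) * real (Suc l)"
      using Suc_times_binomial_eq[of "m + e - 1" l] by (metis of_nat_mult)
    have d_binomial: "real (Suc e) * real (e choose l) = real (Suc e choose Suc l) * real (Suc l)"
      using Suc_times_binomial_eq[of e l] by (metis of_nat_mult)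
    have "sigma_weight m (Suc l) d * real ((m + d - 1) choose Suc l) * real (Suc l)
        = sigma_weight m l e * real (Suc e) / real (Suc (m + e - 1))
            * (real (Suc (m + e - 1)) * real ((m + e - 1) choose l))"
      using Suc top top_binomial by (simp add: field_simps)
    also have "\<dots> = real (Suc e) * (sigma_weight m l e * real ((m + e - 1) choose l))"
      by (simp add: field_simps)
    also have "\<dots> = real (d choose Suc l) * real (Suc l)"
      using Suc.IH[of e] d_binomial Suc by simp
    finally show ?thesis
      by (metis mult_right_cancel of_nat_eq_0_iff nat.distinct(1))
  qed
qed

text \<open>The coefficient of x^d in (1 - x)^m (1 - x)^(-m) = 1.\<close>
lemma alternating_binomial_convolution:
  assumes "m \<ge> 1" "d \<ge> 1"
  shows "(\<Sum>k\<le>d. (-1::real) ^ k * real (m choose k) * real ((m + d - 1 - k) choose (d - k))) = 0"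
proof -
  have summand: "(of_nat m gchoose k) * ((- of_nat m) gchoose (d - k))
      = (-1) ^ d * ((-1::real) ^ k * real (m choose k) * real ((m + d - 1 - k) choose (d - k)))"
    if "k \<le> d" for k
  proof -
    have "(- of_nat m :: real) gchoose (d - k)
        = (-1) ^ (d - k) * ((of_nat (d - k) - (- of_nat m) - 1) gchoose (d - k))"
      by (rule gbinomial_negated_upper)
    also have "(of_nat (d - k) - (- of_nat m) - 1 :: real) = of_nat (m + d - 1 - k)"
      using that assms by (simp add: of_nat_diff)
    also have "(-1::real) ^ (d - k) = (-1) ^ d * (-1) ^ k"
      using that by (cases "even k") (simp_all add: power_diff)
    finally show ?thesis
      by (simp add: binomial_gbinomial)
  qed
  have "(-1) ^ d * (\<Sum>k\<le>d. (-1::real) ^ k * real (m choose k) * real ((m + d - 1 - k) choose (d - k)))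
      = (\<Sum>k\<le>d. (of_nat m gchoose k) * ((- of_nat m) gchoose (d - k)))"
    by (simp add: summand sum_distrib_left atLeast0AtMost)
  also have "\<dots> = (of_nat m + - of_nat m) gchoose d"
    using gbinomial_Vandermonde[of "of_nat m :: real" "- of_nat m" d] by (simp add: atLeast0AtMost)
  also have "\<dots> = 0"
    using assms by (simp add: gbinomial_0_left)
  finally show ?thesis
    by simp
qed

lemma sigma_weight_times_binomial:
  assumes "m \<ge> 1" "d \<ge> 1" "l \<le> m"
  shows "sigma_weight m l d * real ((m + d - 1) choose d)
       = (if l \<le> d then real ((m + d - 1 - l) choose (d - l)) else 0)"
proof -
  have pos: "real ((m + d - 1) choose l) > 0"
    using assms by simp
  have weight: "sigma_weight m l d = real (d choose l) / real ((m + d - 1) choose l)"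
    using sigma_weight_binomial[OF assms(1), of l d] pos by (simp add: field_simps)
  show ?thesis
  proof (cases "l \<le> d")
    case True
    have "d \<le> m + d - 1"
      using assms by simp
    then have "((m + d - 1) choose d) * (d choose l) = ((m + d - 1) choose l) * ((m + d - 1 - l) choose (d - l))"
      using choose_mult[OF True] by blast
    then have "real ((m + d - 1) choose d) * real (d choose l)
        = real ((m + d - 1) choose l) * real ((m + d - 1 - l) choose (d - l))"
      by (metis of_nat_mult)
    then show ?thesis
      using True pos unfolding weight by (simp add: field_simps)
  next
    case False
    then show ?thesis
      unfolding weight by simp
  qed
qed

lemma alternating_sigma_weight_sum:
  assumes "m \<ge> 1" "d \<ge> 1"
  shows "(\<Sum>j<m. (-1::real) ^ j * real (m choose (j + 1)) * sigma_weight m (Suc j) d) = 1"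
proof -
  let ?a = "\<lambda>l. (-1::real) ^ l * real (m choose l)"
  have "(\<Sum>l\<le>m. ?a l * sigma_weight m l d) * real ((m + d - 1) choose d)
      = (\<Sum>l\<le>m. ?a l * (if l \<le> d then real ((m + d - 1 - l) choose (d - l)) else 0))"
    unfolding sum_distrib_right
    by (intro sum.cong) (auto simp: sigma_weight_times_binomial[OF assms, symmetric])
  also have "\<dots> = (\<Sum>l\<le>m + d. ?a l * (if l \<le> d then real ((m + d - 1 - l) choose (d - l)) else 0))"
    by (rule sum.mono_neutral_left) auto
  also have "\<dots> = (\<Sum>l\<le>d. ?a l * real ((m + d - 1 - l) choose (d - l)))"
    by (rule sum.mono_neutral_cong_right) auto
  also have "\<dots> = 0"
    using alternating_binomial_convolution[OF assms] by (simp add: mult.assoc)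
  moreover have "real ((m + d - 1) choose d) \<noteq> 0"
    using assms by simp
  ultimately have "(\<Sum>l\<le>m. ?a l * sigma_weight m l d) = 0"
    by simp
  then show ?thesis
    by (simp add: sum.atMost_shift sum_negf)
qed

section \<open>Multi-indices, shifts and the Cauchy product\<close>

lemma sum_fun_apply: "(\<Sum>i\<in>I. F i) x = (\<Sum>i\<in>I. F i x)"
  by (induction I rule: infinite_finite_induct) auto

lemma mabs_fun_upd: "mabs ((\<alpha>::'n::finite mindex)(i := x)) + \<alpha> i = mabs \<alpha> + x"
proof -
  have "mabs (\<alpha>(i := x)) = x + (\<Sum>j\<in>UNIV - {i}. \<alpha> j)"
    unfolding mabs_def by (simp add: sum.remove[of UNIV i])
  moreover have "mabs \<alpha> = \<alpha> i + (\<Sum>j\<in>UNIV - {i}. \<alpha> j)"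
    unfolding mabs_def by (simp add: sum.remove[of UNIV i])
  ultimately show ?thesis
    by simp
qed

lemma mabs_eq_0_iff: "mabs (\<alpha>::'n::finite mindex) = 0 \<longleftrightarrow> \<alpha> = (\<lambda>_. 0)"
  unfolding mabs_def by (auto simp: fun_eq_iff)

lemma le_mabs: "(\<alpha>::'n::finite mindex) i \<le> mabs \<alpha>"
  unfolding mabs_def by (rule member_le_sum) auto

lemma mabs_mono: "(\<beta>::'n::finite mindex) \<le> \<alpha> \<Longrightarrow> mabs \<beta> \<le> mabs \<alpha>"
  unfolding mabs_def le_fun_def by (rule sum_mono) simp

lemma mabs_diff: "(\<beta>::'n::finite mindex) \<le> \<alpha> \<Longrightarrow> mabs (\<alpha> - \<beta>) = mabs \<alpha> - mabs \<beta>"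
proof -
  assume "\<beta> \<le> \<alpha>"
  then have "mabs (\<alpha> - \<beta>) + mabs \<beta> = mabs \<alpha>"
    unfolding mabs_def by (simp add: le_fun_def flip: sum.distrib)
  then show ?thesis
    by simp
qed

lemma mfact_pos: "mfact \<alpha> > 0"
  unfolding mfact_def by (simp add: prod_pos)

lemma finite_mindex_le: "finite {\<beta>::'n::finite mindex. \<beta> \<le> \<alpha>}"
proof -
  have "{\<beta>::'n mindex. \<beta> \<le> \<alpha>} = Pi\<^sub>E UNIV (\<lambda>i. {..\<alpha> i})"
    by (auto simp: PiE_UNIV_domain le_fun_def)
  then show ?thesis
    by (simp add: finite_PiE)
qed

lemma finite_mabs_le: "finite {\<beta>::'n::finite mindex. mabs \<beta> \<le> N}"
  by (rule finite_subset[OF _ finite_mindex_le[of "\<lambda>_. N"]])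
     (auto simp: le_fun_def intro: order_trans[OF le_mabs])

definition incr :: "'n \<Rightarrow> 'n mindex \<Rightarrow> 'n mindex" where
  "incr i \<beta> = \<beta>(i := Suc (\<beta> i))"

lemma mabs_incr: "mabs (incr i (\<alpha>::'n::finite mindex)) = Suc (mabs \<alpha>)"
  using mabs_fun_upd[of \<alpha> i "Suc (\<alpha> i)"] unfolding incr_def by simp

lemma mfact_incr: "mfact (incr i (\<alpha>::'n::finite mindex)) = mfact \<alpha> * Suc (\<alpha> i)"
proof -
  have "mfact (incr i \<alpha>) = fact (Suc (\<alpha> i)) * (\<Prod>j\<in>UNIV - {i}. fact (\<alpha> j))"
    unfolding mfact_def incr_def by (simp add: prod.remove[of UNIV i])
  moreover have "mfact \<alpha> = fact (\<alpha> i) * (\<Prod>j\<in>UNIV - {i}. fact (\<alpha> j))"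
    unfolding mfact_def by (simp add: prod.remove[of UNIV i])
  ultimately show ?thesis
    by (simp add: algebra_simps)
qed

lemma incr_decr: "\<alpha> i \<noteq> 0 \<Longrightarrow> incr i (\<alpha>(i := \<alpha> i - 1)) = \<alpha>"
  by (auto simp: incr_def fun_eq_iff)

lemma inj_incr: "inj (incr i)"
  by (rule injI) (metis fun_upd_idem_iff fun_upd_upd incr_def nat.inject fun_upd_same)

lemma range_incr: "range (incr i) = {\<alpha>. \<alpha> i \<noteq> 0}"
proof (intro antisym subsetI)
  fix \<alpha> :: "'a mindex"
  assume "\<alpha> \<in> {\<alpha>. \<alpha> i \<noteq> 0}"
  then show "\<alpha> \<in> range (incr i)"
    using incr_decr[of \<alpha> i] by (simp add: range_eqI[OF sym])
qed (auto simp: incr_def)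

lemma Mzi_incr: "Mzi i f (incr i \<beta>) = f \<beta>"
  unfolding Mzi_def incr_def by simp

lemma Mzi_scale: "Mzi i (\<lambda>\<alpha>. c * f \<alpha>) = (\<lambda>\<alpha>. c * Mzi i f \<alpha>)"
  unfolding Mzi_def by auto

lemma Mzi_diff: "Mzi i (f - g) = Mzi i f - Mzi i g"
  unfolding Mzi_def by auto

lemma Mz_apply: "Mz F \<alpha> = (\<Sum>i\<in>UNIV. Mzi i (F i) \<alpha>)"
  unfolding Mz_def by (rule sum_fun_apply)

lemma Mz_diff: "Mz (F - G) = Mz F - Mz G"
  unfolding Mz_def by (simp add: Mzi_diff sum_subtractf)

lemma Mz_eq_0_at_0: "mabs \<alpha> = 0 \<Longrightarrow> Mz F \<alpha> = 0"
  unfolding Mz_apply Mzi_def by (simp add: mabs_eq_0_iff)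

lemma fmult_scale: "fmult a (\<lambda>\<alpha>. c * f \<alpha>) = (\<lambda>\<alpha>. c * fmult a f \<alpha>)"
  unfolding fmult_def by (simp add: sum_distrib_left ac_simps)

lemma fmult_sum: "fmult a (\<Sum>i\<in>I. F i) = (\<Sum>i\<in>I. fmult a (F i))"
proof
  fix \<alpha> :: "'a::finite mindex"
  show "fmult a (\<Sum>i\<in>I. F i) \<alpha> = (\<Sum>i\<in>I. fmult a (F i)) \<alpha>"
    unfolding fmult_def sum_fun_apply by (simp add: sum_distrib_left sum.swap[of _ I])
qed

lemma fmult_one_fun: "fmult a one_fun = a"
proof
  fix \<alpha> :: "'a::finite mindex"
  have "\<alpha> - \<beta> = (\<lambda>_. 0) \<longleftrightarrow> \<beta> = \<alpha>" if "\<beta> \<le> \<alpha>" for \<beta>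
  proof -
    have "\<alpha> x - \<beta> x = 0 \<longleftrightarrow> \<beta> x = \<alpha> x" for x
      using that[unfolded le_fun_def, rule_format, of x] by auto
    then show ?thesis
      by (simp add: fun_eq_iff)
  qed
  then have "fmult a one_fun \<alpha> = (\<Sum>\<beta>\<in>{\<beta>. \<beta> \<le> \<alpha>}. if \<beta> = \<alpha> then a \<beta> else 0)"
    unfolding fmult_def one_fun_def by (intro sum.cong) auto
  then show "fmult a one_fun \<alpha> = a \<alpha>"
    by (simp add: finite_mindex_le)
qed

lemma Mzi_diff_apply:
  assumes "\<beta> \<le> \<alpha>"
  shows "Mzi i u (\<alpha> - \<beta>)
       = (if \<alpha> i \<noteq> 0 \<and> \<beta> \<le> \<alpha>(i := \<alpha> i - 1) then u (\<alpha>(i := \<alpha> i - 1) - \<beta>) else 0)"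
proof -
  have "\<beta> \<le> \<alpha>(i := \<alpha> i - 1) \<longleftrightarrow> \<beta> i < \<alpha> i" if "\<alpha> i \<noteq> 0"
    using assms that by (auto simp: le_fun_def)
  moreover have "(\<alpha> - \<beta>)(i := (\<alpha> - \<beta>) i - 1) = \<alpha>(i := \<alpha> i - 1) - \<beta>" if "\<beta> i < \<alpha> i"
    using that by (auto simp: fun_eq_iff)
  ultimately show ?thesis
    using assms by (auto simp: Mzi_def le_fun_def)
qed

lemma Mzi_fmult: "Mzi i (fmult a u) = fmult a (Mzi i u)"
proof
  fix \<alpha> :: "'a::finite mindex"
  let ?\<alpha>' = "\<alpha>(i := \<alpha> i - 1)"
  have "fmult a (Mzi i u) \<alpha>
      = (\<Sum>\<beta>\<in>{\<beta>\<in>{\<beta>. \<beta> \<le> \<alpha>}. \<alpha> i \<noteq> 0 \<and> \<beta> \<le> ?\<alpha>'}. a \<beta> * u (?\<alpha>' - \<beta>))"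
    unfolding fmult_def sum.inter_filter[OF finite_mindex_le]
    by (intro sum.cong) (auto simp: Mzi_diff_apply)
  also have "\<dots> = Mzi i (fmult a u) \<alpha>"
  proof (cases "\<alpha> i = 0")
    case False
    have "?\<alpha>' \<le> \<alpha>"
      by (simp add: le_fun_def)
    then have "{\<beta>\<in>{\<beta>. \<beta> \<le> \<alpha>}. \<alpha> i \<noteq> 0 \<and> \<beta> \<le> ?\<alpha>'} = {\<beta>. \<beta> \<le> ?\<alpha>'}"
      using False by (auto intro: order.trans)
    then show ?thesis
      using False by (simp add: Mzi_def fmult_def)
  qed (simp add: Mzi_def)
  finally show "Mzi i (fmult a u) \<alpha> = fmult a (Mzi i u) \<alpha>"
    by simp
qed

lemma fmult_eq_0_below:
  assumes "\<And>\<beta>. mabs \<beta> \<noteq> r \<Longrightarrow> a \<beta> = 0" and "mabs \<alpha> < r"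
  shows "fmult a f \<alpha> = 0"
  unfolding fmult_def using assms by (intro sum.neutral) (auto dest: mabs_mono)

section \<open>The coefficient space H_m\<close>

lemma adj_eqI:
  assumes "\<And>y. y \<notin> B \<Longrightarrow> S y = 0" and "\<And>y. y \<in> B \<Longrightarrow> S y \<in> A"
    and "\<And>x y. x \<in> A \<Longrightarrow> y \<in> B \<Longrightarrow> ib (T x) y = ia x (S y)"
    and ext: "\<And>u v. u \<in> A \<Longrightarrow> v \<in> A \<Longrightarrow> (\<And>x. x \<in> A \<Longrightarrow> ia x u = ia x v) \<Longrightarrow> u = v"
  shows "adj A ia B ib T = S"
  unfolding adj_def
proof (rule the_equality)
  fix S'
  assume S': "(\<forall>y. y \<notin> B \<longrightarrow> S' y = 0) \<and> (\<forall>y\<in>B. S' y \<in> A) \<and> (\<forall>x\<in>A. \<forall>y\<in>B. ib (T x) y = ia x (S' y))"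
  show "S' = S"
  proof
    fix y
    show "S' y = S y"
    proof (cases "y \<in> B")
      case True
      then show ?thesis
        using S' assms(2,3) by (intro ext) auto
    next
      case False
      then show ?thesis
        using S' assms(1) by simp
    qed
  qed
qed (use assms in blast)

lemma subset_hclosure:
  assumes "V \<subseteq> A" and "\<And>x. x \<in> V \<Longrightarrow> ia (x - x) (x - x) = 0"
  shows "V \<subseteq> hclosure A ia V"
  unfolding hclosure_def using assms by force

lemma le_0_if_le_eps:
  assumes "\<And>e. e > 0 \<Longrightarrow> (x::real) \<le> C * e"
  shows "x \<le> 0"
proof (rule field_le_epsilon)
  fix e :: real
  assume "e > 0"
  show "x \<le> 0 + e"
  proof (cases "C > 0")
    case True
    then show ?thesis
      using assms[of "e / C"] \<open>e > 0\<close> by simp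
  next
    case False
    then show ?thesis
      using assms[of e] \<open>e > 0\<close> mult_nonpos_nonneg[of C e] by linarith
  qed
qed

context
  fixes m :: nat
begin

lemma rho_pos: "rho m \<alpha> > 0"
  unfolding rho_def using mfact_pos[of \<alpha>] by simp

definition sqnormH :: "'n::finite coeffs \<Rightarrow> real" where
  "sqnormH f = (\<Sum>\<^sub>\<infinity>\<alpha>. (cmod (f \<alpha>))\<^sup>2 / rho m \<alpha>)"

lemma mem_Hm_iff: "f \<in> Hm m \<longleftrightarrow> (\<lambda>\<alpha>. (cmod (f \<alpha>))\<^sup>2 / rho m \<alpha>) summable_on UNIV"
  unfolding Hm_def by simp

lemma Hm_if_dominated:
  assumes g: "g \<in> Hm m" and dom: "\<And>\<alpha>. cmod (f \<alpha>) \<le> B * cmod (g \<alpha>)"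
  shows "f \<in> Hm m"
  unfolding mem_Hm_iff
proof (rule summable_on_comparison_test)
  show "(\<lambda>\<alpha>. B\<^sup>2 * ((cmod (g \<alpha>))\<^sup>2 / rho m \<alpha>)) summable_on UNIV"
    using g unfolding mem_Hm_iff by (rule summable_on_cmult_right)
  fix \<alpha> :: "'a::finite mindex"
  have "(cmod (f \<alpha>))\<^sup>2 \<le> (B * cmod (g \<alpha>))\<^sup>2"
    using dom[of \<alpha>] by (simp add: power_mono)
  then show "(cmod (f \<alpha>))\<^sup>2 / rho m \<alpha> \<le> B\<^sup>2 * ((cmod (g \<alpha>))\<^sup>2 / rho m \<alpha>)"
    using rho_pos[of \<alpha>] by (simp add: divide_right_mono power_mult_distrib)
qed (simp add: rho_pos less_imp_le)

lemma zero_in_Hm: "0 \<in> Hm m"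
  unfolding mem_Hm_iff by simp

lemma Hm_add:
  assumes "f \<in> Hm m" "g \<in> Hm m"
  shows "f + g \<in> Hm m"
  unfolding mem_Hm_iff
proof (rule summable_on_comparison_test)
  show "(\<lambda>\<alpha>. 2 * ((cmod (f \<alpha>))\<^sup>2 / rho m \<alpha>) + 2 * ((cmod (g \<alpha>))\<^sup>2 / rho m \<alpha>)) summable_on UNIV"
    using assms unfolding mem_Hm_iff by (intro summable_on_add summable_on_cmult_right)
  fix \<alpha> :: "'a::finite mindex"
  have "(cmod (f \<alpha> + g \<alpha>))\<^sup>2 \<le> (cmod (f \<alpha>) + cmod (g \<alpha>))\<^sup>2"
    by (simp add: power_mono norm_triangle_ineq)
  also have "\<dots> \<le> 2 * (cmod (f \<alpha>))\<^sup>2 + 2 * (cmod (g \<alpha>))\<^sup>2"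
    using sum_squares_bound[of "cmod (f \<alpha>)" "cmod (g \<alpha>)"] by (simp add: power2_sum)
  finally show "(cmod ((f + g) \<alpha>))\<^sup>2 / rho m \<alpha>
      \<le> 2 * ((cmod (f \<alpha>))\<^sup>2 / rho m \<alpha>) + 2 * ((cmod (g \<alpha>))\<^sup>2 / rho m \<alpha>)"
    using rho_pos[of \<alpha>] by (simp add: divide_right_mono flip: add_divide_distrib)
qed (simp add: rho_pos less_imp_le)

lemma Hm_scale: "f \<in> Hm m \<Longrightarrow> (\<lambda>\<alpha>. c * f \<alpha>) \<in> Hm m"
  by (rule Hm_if_dominated[where B = "cmod c"]) (auto simp: norm_mult)

lemma Hm_diff: "f \<in> Hm m \<Longrightarrow> g \<in> Hm m \<Longrightarrow> f - g \<in> Hm m"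
  using Hm_add[of f "- g"] Hm_if_dominated[of g "- g" 1] by simp

lemma Hm_sum: "(\<And>i. i \<in> I \<Longrightarrow> F i \<in> Hm m) \<Longrightarrow> (\<Sum>i\<in>I. F i) \<in> Hm m"
  by (induction I rule: infinite_finite_induct) (auto intro: Hm_add zero_in_Hm)

lemma Hm_restrict: "f \<in> Hm m \<Longrightarrow> (\<lambda>\<alpha>. if P \<alpha> then f \<alpha> else 0) \<in> Hm m"
  by (rule Hm_if_dominated[where B = 1]) auto

lemma ipH_summable:
  assumes "f \<in> Hm m" "g \<in> Hm m"
  shows "(\<lambda>\<alpha>. f \<alpha> * cnj (g \<alpha>) / complex_of_real (rho m \<alpha>)) summable_on UNIV"
proof -
  have "(\<lambda>\<alpha>. norm (f \<alpha> * cnj (g \<alpha>) / complex_of_real (rho m \<alpha>))) summable_on UNIV"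
  proof (rule summable_on_comparison_test)
    show "(\<lambda>\<alpha>. (cmod (f \<alpha>))\<^sup>2 / rho m \<alpha> + (cmod (g \<alpha>))\<^sup>2 / rho m \<alpha>) summable_on UNIV"
      using assms unfolding mem_Hm_iff by (intro summable_on_add)
    fix \<alpha> :: "'a::finite mindex"
    have "cmod (f \<alpha>) * cmod (g \<alpha>) \<le> (cmod (f \<alpha>))\<^sup>2 + (cmod (g \<alpha>))\<^sup>2"
    proof -
      have "2 * (cmod (f \<alpha>) * cmod (g \<alpha>)) \<le> (cmod (f \<alpha>))\<^sup>2 + (cmod (g \<alpha>))\<^sup>2"
        using sum_squares_bound[of "cmod (f \<alpha>)" "cmod (g \<alpha>)"] by (simp add: mult.assoc)
      moreover have "0 \<le> cmod (f \<alpha>) * cmod (g \<alpha>)"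
        by simp
      ultimately show ?thesis
        by linarith
    qed
    then show "norm (f \<alpha> * cnj (g \<alpha>) / complex_of_real (rho m \<alpha>))
        \<le> (cmod (f \<alpha>))\<^sup>2 / rho m \<alpha> + (cmod (g \<alpha>))\<^sup>2 / rho m \<alpha>"
      using rho_pos[of \<alpha>]
      by (simp add: norm_mult norm_divide divide_right_mono flip: add_divide_distrib)
  qed simp
  then show ?thesis
    using summable_on_iff_abs_summable_on_complex by blast
qed

lemma ipH_add_left:
  "f \<in> Hm m \<Longrightarrow> g \<in> Hm m \<Longrightarrow> h \<in> Hm m \<Longrightarrow> ipH m (f + g) h = ipH m f h + ipH m g h"
  unfolding ipH_def by (simp add: distrib_right add_divide_distrib infsum_add ipH_summable)

lemma ipH_add_right:
  "f \<in> Hm m \<Longrightarrow> g \<in> Hm m \<Longrightarrow> h \<in> Hm m \<Longrightarrow> ipH m h (f + g) = ipH m h f + ipH m h g"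
  unfolding ipH_def by (simp add: distrib_left add_divide_distrib infsum_add ipH_summable)

lemma ipH_uminus_left: "ipH m (- f) h = - ipH m f h"
  unfolding ipH_def by (simp add: infsum_uminus)

lemma ipH_uminus_right: "ipH m h (- f) = - ipH m h f"
  unfolding ipH_def by (simp add: infsum_uminus)

lemma ipH_diff_left:
  "f \<in> Hm m \<Longrightarrow> g \<in> Hm m \<Longrightarrow> h \<in> Hm m \<Longrightarrow> ipH m (f - g) h = ipH m f h - ipH m g h"
  using ipH_add_left[of f "- g" h] Hm_diff[OF zero_in_Hm, of g] by (simp add: ipH_uminus_left)

lemma ipH_diff_right:
  "f \<in> Hm m \<Longrightarrow> g \<in> Hm m \<Longrightarrow> h \<in> Hm m \<Longrightarrow> ipH m h (f - g) = ipH m h f - ipH m h g"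
  using ipH_add_right[of f "- g" h] Hm_diff[OF zero_in_Hm, of g] by (simp add: ipH_uminus_right)

lemma ipH_sum_left:
  "(\<And>i. i \<in> I \<Longrightarrow> F i \<in> Hm m) \<Longrightarrow> h \<in> Hm m \<Longrightarrow> ipH m (\<Sum>i\<in>I. F i) h = (\<Sum>i\<in>I. ipH m (F i) h)"
proof (induction I rule: infinite_finite_induct)
  case (insert x I)
  have "ipH m (F x + (\<Sum>i\<in>I. F i)) h = ipH m (F x) h + ipH m (\<Sum>i\<in>I. F i) h"
    using insert by (intro ipH_add_left) (auto intro: Hm_sum)
  then show ?case
    using insert by (simp only: sum.insert[OF insert(1,2)]) simp
qed (simp_all add: ipH_def)

lemma ipH_self:
  assumes "f \<in> Hm m"
  shows "ipH m f f = complex_of_real (sqnormH f)"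
proof -
  have "((\<lambda>\<alpha>. complex_of_real ((cmod (f \<alpha>))\<^sup>2 / rho m \<alpha>)) has_sum complex_of_real (sqnormH f)) UNIV"
    using assms unfolding sqnormH_def mem_Hm_iff by (intro has_sum_of_real has_sum_infsum)
  then show ?thesis
    unfolding ipH_def by (simp add: infsumI flip: complex_norm_square)
qed

lemma sqnormH_nonneg: "sqnormH f \<ge> 0"
  unfolding sqnormH_def by (rule infsum_nonneg) (simp add: rho_pos less_imp_le)

lemma coeff_le_sqnormH: "f \<in> Hm m \<Longrightarrow> (cmod (f \<alpha>))\<^sup>2 / rho m \<alpha> \<le> sqnormH f"
  unfolding sqnormH_def mem_Hm_iff
  using infsum_mono_neutral[of "\<lambda>\<alpha>. (cmod (f \<alpha>))\<^sup>2 / rho m \<alpha>" "{\<alpha>}" _ UNIV]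
  by (simp add: rho_pos less_imp_le)

lemma sqnormH_eq_0:
  assumes "f \<in> Hm m" "sqnormH f = 0"
  shows "f = 0"
proof
  fix \<alpha> :: "'a::finite mindex"
  have "(cmod (f \<alpha>))\<^sup>2 / rho m \<alpha> \<le> 0"
    using coeff_le_sqnormH[OF assms(1), of \<alpha>] assms(2) by simp
  then show "f \<alpha> = 0 \<alpha>"
    using rho_pos[of \<alpha>] by (simp add: divide_le_0_iff)
qed

lemma norm_ipH_le:
  assumes f: "f \<in> Hm m" and g: "g \<in> Hm m" and s: "s > 0"
  shows "cmod (ipH m f g) \<le> (s * sqnormH f + sqnormH g / s) / 2"
proof -
  let ?h = "\<lambda>\<alpha>. f \<alpha> * cnj (g \<alpha>) / complex_of_real (rho m \<alpha>)"
  let ?b = "\<lambda>\<alpha>. (s / 2) * ((cmod (f \<alpha>))\<^sup>2 / rho m \<alpha>) + (1 / (2 * s)) * ((cmod (g \<alpha>))\<^sup>2 / rho m \<alpha>)"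
  have h: "(\<lambda>\<alpha>. norm (?h \<alpha>)) summable_on UNIV"
    using ipH_summable[OF f g] summable_on_iff_abs_summable_on_complex by metis
  have b: "?b summable_on UNIV"
    using f g unfolding mem_Hm_iff by (intro summable_on_add summable_on_cmult_right)
  have "cmod (ipH m f g) \<le> (\<Sum>\<^sub>\<infinity>\<alpha>. norm (?h \<alpha>))"
    unfolding ipH_def by (rule norm_infsum_bound[OF h])
  also have "\<dots> \<le> (\<Sum>\<^sub>\<infinity>\<alpha>. ?b \<alpha>)"
  proof (rule infsum_mono[OF h b])
    fix \<alpha> :: "'a::finite mindex"
    have "2 * (s * cmod (f \<alpha>)) * cmod (g \<alpha>) \<le> (s * cmod (f \<alpha>))\<^sup>2 + (cmod (g \<alpha>))\<^sup>2"
      by (rule sum_squares_bound)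
    then have "cmod (f \<alpha>) * cmod (g \<alpha>) \<le> (s * (cmod (f \<alpha>))\<^sup>2 + (cmod (g \<alpha>))\<^sup>2 / s) / 2"
      using s by (simp add: field_simps power2_eq_square)
    then show "norm (?h \<alpha>) \<le> ?b \<alpha>"
      using rho_pos[of \<alpha>] s by (simp add: norm_mult norm_divide field_simps)
  qed
  also have "\<dots> = (\<Sum>\<^sub>\<infinity>\<alpha>. (s / 2) * ((cmod (f \<alpha>))\<^sup>2 / rho m \<alpha>))
      + (\<Sum>\<^sub>\<infinity>\<alpha>. (1 / (2 * s)) * ((cmod (g \<alpha>))\<^sup>2 / rho m \<alpha>))"
    using f g unfolding mem_Hm_iff by (intro infsum_add summable_on_cmult_right)
  also have "\<dots> = (s * sqnormH f + sqnormH g / s) / 2"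
    unfolding sqnormH_def infsum_cmult_right' by (simp add: field_simps)
  finally show ?thesis .
qed

definition monomial :: "'n::finite mindex \<Rightarrow> 'n coeffs" where
  "monomial \<beta> = (\<lambda>\<alpha>. if \<alpha> = \<beta> then 1 else 0)"

lemma monomial_Hm: "monomial \<beta> \<in> Hm m"
  unfolding mem_Hm_iff monomial_def
  by (rule summable_on_cong_neutral[where S = "{\<beta>}", THEN iffD1]) auto

lemma ipH_monomial: "ipH m (monomial \<beta>) g = cnj (g \<beta>) / complex_of_real (rho m \<beta>)"
  unfolding ipH_def monomial_def
  by (subst infsum_cong_neutral[where T = "{\<beta>}"]) auto

lemma ipH_ext:
  assumes "\<And>x. x \<in> Hm m \<Longrightarrow> ipH m x u = ipH m x v"
  shows "u = v"
proof
  fix \<beta> :: "'a::finite mindex"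
  have "cnj (u \<beta>) / complex_of_real (rho m \<beta>) = cnj (v \<beta>) / complex_of_real (rho m \<beta>)"
    using assms[OF monomial_Hm] by (simp add: ipH_monomial)
  then show "u \<beta> = v \<beta>"
    using rho_pos[of \<beta>] by simp
qed

lemma sqnormH_tail_small:
  assumes f: "f \<in> Hm m" and e: "e > 0"
  obtains N where "sqnormH (\<lambda>\<beta>::'n::finite mindex. if mabs \<beta> \<le> N then 0 else f \<beta>) < e"
proof -
  let ?g = "\<lambda>\<beta>. (cmod (f \<beta>))\<^sup>2 / rho m \<beta>"
  have g: "?g summable_on UNIV"
    using f unfolding mem_Hm_iff .
  then have "(sum ?g \<longlongrightarrow> sqnormH f) (finite_subsets_at_top UNIV)"
    unfolding sqnormH_def has_sum_def[symmetric] by (rule has_sum_infsum)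
  then have "\<forall>\<^sub>F Y in finite_subsets_at_top UNIV. dist (sum ?g Y) (sqnormH f) < e"
    using e by (rule tendstoD)
  then obtain X where X: "finite X"
    and close: "\<forall>Y. finite Y \<and> X \<subseteq> Y \<and> Y \<subseteq> UNIV \<longrightarrow> dist (sum ?g Y) (sqnormH f) < e"
    by (simp only: eventually_finite_subsets_at_top) (elim exE conjE)
  define N where "N = (\<Sum>\<beta>\<in>X. mabs \<beta>)"
  define Y where "Y = {\<beta>::'n mindex. mabs \<beta> \<le> N}"
  have Y: "finite Y"
    unfolding Y_def by (rule finite_mabs_le)
  have "X \<subseteq> Y"
    unfolding Y_def N_def using X by (auto intro: member_le_sum)
  have "sqnormH (\<lambda>\<beta>. if mabs \<beta> \<le> N then 0 else f \<beta>) = (\<Sum>\<^sub>\<infinity>\<beta>\<in>UNIV - Y. ?g \<beta>)"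
    unfolding sqnormH_def by (rule infsum_cong_neutral) (auto simp: Y_def)
  also have "\<dots> = sqnormH f - sum ?g Y"
    unfolding sqnormH_def using infsum_Diff[OF g, of Y] Y by simp
  also have "\<dots> < e"
  proof -
    have "dist (sum ?g Y) (sqnormH f) < e"
      using close Y \<open>X \<subseteq> Y\<close> by blast
    then show ?thesis
      by (simp add: dist_real_def)
  qed
  finally show ?thesis
    by (rule that)
qed

lemma mem_Hn_iff: "F \<in> Hn m \<longleftrightarrow> (\<forall>i. F i \<in> Hm m)"
  unfolding Hn_def by simp

lemma zero_in_Hn: "0 \<in> Hn m"
  unfolding mem_Hn_iff by (simp add: zero_in_Hm)

lemma Hn_diff: "F \<in> Hn m \<Longrightarrow> G \<in> Hn m \<Longrightarrow> F - G \<in> Hn m"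
  unfolding mem_Hn_iff by (auto intro: Hm_diff)

lemma ipHn_ext:
  fixes U V :: "'n::finite \<Rightarrow> 'n coeffs"
  assumes "\<And>X. X \<in> Hn m \<Longrightarrow> ipHn m X U = ipHn m X V"
  shows "U = V"
proof
  fix i
  show "U i = V i"
  proof (rule ipH_ext)
    fix x :: "'n coeffs"
    assume x: "x \<in> Hm m"
    define X where "X = (\<lambda>j. if j = i then x else 0)"
    have "X \<in> Hn m"
      unfolding mem_Hn_iff X_def using x by (simp add: zero_in_Hm)
    moreover have "ipHn m X W = ipH m x (W i)" for W
    proof -
      have "ipHn m X W = (\<Sum>j\<in>UNIV. if j = i then ipH m x (W j) else 0)"
        unfolding ipHn_def X_def by (intro sum.cong) (auto simp: ipH_def)
      then show ?thesis
        by simp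
    qed
    ultimately show "ipH m x (U i) = ipH m x (V i)"
      using assms by metis
  qed
qed

definition sqnormHn :: "('n::finite \<Rightarrow> 'n coeffs) \<Rightarrow> real" where
  "sqnormHn F = (\<Sum>i\<in>UNIV. sqnormH (F i))"

lemma ipHn_diff_left:
  "F \<in> Hn m \<Longrightarrow> G \<in> Hn m \<Longrightarrow> H \<in> Hn m \<Longrightarrow> ipHn m (F - G) H = ipHn m F H - ipHn m G H"
  unfolding ipHn_def mem_Hn_iff by (simp add: ipH_diff_left sum_subtractf)

lemma ipHn_diff_right:
  "F \<in> Hn m \<Longrightarrow> G \<in> Hn m \<Longrightarrow> H \<in> Hn m \<Longrightarrow> ipHn m H (F - G) = ipHn m H F - ipHn m H G"
  unfolding ipHn_def mem_Hn_iff by (simp add: ipH_diff_right sum_subtractf)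

lemma ipHn_self: "F \<in> Hn m \<Longrightarrow> ipHn m F F = complex_of_real (sqnormHn F)"
  unfolding ipHn_def sqnormHn_def mem_Hn_iff by (simp add: ipH_self)

lemma sqnormHn_nonneg: "sqnormHn F \<ge> 0"
  unfolding sqnormHn_def by (simp add: sum_nonneg sqnormH_nonneg)

lemma sqnormHn_eq_0:
  assumes "F \<in> Hn m" "sqnormHn F = 0"
  shows "F = 0"
proof
  fix i
  have "sqnormH (F i) = 0"
    using assms(2) unfolding sqnormHn_def by (simp add: sum_nonneg_eq_0_iff sqnormH_nonneg)
  then show "F i = 0 i"
    using assms(1) sqnormH_eq_0[of "F i"] unfolding mem_Hn_iff by simp
qed

lemma norm_ipHn_le:
  assumes "F \<in> Hn m" "G \<in> Hn m" "s > 0"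
  shows "cmod (ipHn m F G) \<le> (s * sqnormHn F + sqnormHn G / s) / 2"
proof -
  have "cmod (ipHn m F G) \<le> (\<Sum>i\<in>UNIV. cmod (ipH m (F i) (G i)))"
    unfolding ipHn_def by (rule norm_sum)
  also have "\<dots> \<le> (\<Sum>i\<in>UNIV. (s * sqnormH (F i) + sqnormH (G i) / s) / 2)"
    using assms by (intro sum_mono norm_ipH_le) (auto simp: mem_Hn_iff)
  also have "\<dots> = ((\<Sum>i\<in>UNIV. s * sqnormH (F i)) + (\<Sum>i\<in>UNIV. sqnormH (G i) / s)) / 2"
    by (simp add: sum.distrib flip: sum_divide_distrib)
  also have "\<dots> = (s * sqnormHn F + sqnormHn G / s) / 2"
    unfolding sqnormHn_def by (simp add: sum_distrib_left sum_divide_distrib)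
  finally show ?thesis .
qed

lemma ipHn_eq_0_on_hclosure:
  assumes w: "w \<in> Hn m" and orth: "\<And>v. v \<in> V \<Longrightarrow> ipHn m w v = 0"
    and V: "V \<subseteq> Hn m" and v: "v \<in> hclosure (Hn m) (ipHn m) V"
  shows "ipHn m w v = 0"
proof -
  have "cmod (ipHn m w v) \<le> (sqnormHn w + 1) / 2 * d" if d: "d > 0" for d
  proof -
    obtain v' where v': "v' \<in> V" and close: "sqrt (Re (ipHn m (v - v') (v - v'))) < d"
      using v d unfolding hclosure_def by blast
    have vv': "v - v' \<in> Hn m"
      using v v' V unfolding hclosure_def by (auto intro: Hn_diff)
    then have "sqrt (sqnormHn (v - v')) < d"
      using close by (simp add: ipHn_self)
    then have "(sqrt (sqnormHn (v - v')))\<^sup>2 < d\<^sup>2"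
      using sqnormHn_nonneg[of "v - v'"] by (intro power_strict_mono) auto
    then have small: "sqnormHn (v - v') < d\<^sup>2"
      using sqnormHn_nonneg[of "v - v'"] by simp
    have "ipHn m w v = ipHn m w (v - v')"
      using ipHn_diff_right[of v v' w] v v' V w orth[OF v'] unfolding hclosure_def by auto
    also have "cmod \<dots> \<le> (d * sqnormHn w + sqnormHn (v - v') / d) / 2"
      by (rule norm_ipHn_le[OF w vv' d])
    also have "\<dots> \<le> (d * sqnormHn w + d\<^sup>2 / d) / 2"
      using small d by (simp add: divide_right_mono)
    also have "\<dots> = (sqnormHn w + 1) / 2 * d"
      using d by (simp add: field_simps power2_eq_square)
    finally show ?thesis .
  qed
  then have "cmod (ipHn m w v) \<le> 0"
    by (rule le_0_if_le_eps)
  then show ?thesis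
    by simp
qed

lemma orth_proj_eqI:
  assumes G: "G \<in> Hn m" and W: "W \<subseteq> Hn m" and y: "y \<in> W"
    and orth: "\<And>v. v \<in> W \<Longrightarrow> ipHn m (G - y) v = 0"
  shows "orth_proj (ipHn m) W G = y"
  unfolding orth_proj_def
proof (rule the_equality)
  fix y'
  assume y': "y' \<in> W \<and> (\<forall>v\<in>W. ipHn m (G - y') v = 0)"
  have yH: "y \<in> Hn m" and y'H: "y' \<in> Hn m"
    using y y' W by auto
  have "ipHn m (y - y') v = 0" if "v \<in> W" for v
  proof -
    have "y - y' = (G - y') - (G - y)"
      by simp
    then show ?thesis
      using that y' orth[OF that] ipHn_diff_left[of "G - y'" "G - y" v] G W yH y'H
      by (auto intro: Hn_diff)
  qed
  then have "ipHn m (y - y') (y - y') = 0"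
    using ipHn_diff_right[OF yH y'H Hn_diff[OF yH y'H]] y y' by simp
  then have "sqnormHn (y - y') = 0"
    using ipHn_self[OF Hn_diff[OF yH y'H]] by simp
  then show "y' = y"
    using sqnormHn_eq_0[OF Hn_diff[OF yH y'H]] by simp
qed (use y orth in blast)

definition hom_part :: "nat \<Rightarrow> 'n::finite coeffs \<Rightarrow> 'n coeffs" where
  "hom_part d f = (\<lambda>\<beta>. if mabs \<beta> = d then f \<beta> else 0)"

lemma fmult_hom_part:
  assumes "\<And>\<beta>. mabs \<beta> \<noteq> r \<Longrightarrow> a \<beta> = 0"
  shows "fmult a (hom_part (mabs \<alpha> - r) f) \<alpha> = fmult a f \<alpha>"
  unfolding fmult_def hom_part_def using assms by (intro sum.cong) (auto simp: mabs_diff)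

lemma hom_part_Hhom: "f \<in> Hm m \<Longrightarrow> hom_part d f \<in> Hhom m d"
  unfolding Hhom_def hom_part_def by (auto intro: Hm_restrict)

end

section \<open>Adjoints of the shifts and the projection onto the range of M_z^*\<close>

locale Hm_ball =
  fixes m :: nat
  assumes m_pos: "m \<ge> 1"
begin

lemma rho_incr: "rho m (incr i \<beta>) = rho m \<beta> * real (m + mabs \<beta>) / real (Suc (\<beta> i))"
proof -
  have "m + mabs \<beta> = Suc (m + mabs \<beta> - 1)"
    using m_pos by simp
  then have "(fact (m + mabs \<beta>) :: real) = real (m + mabs \<beta>) * fact (m + mabs \<beta> - 1)"
    by (metis fact_Suc of_nat_fact)
  then show ?thesis
    unfolding rho_def mabs_incr mfact_incr by (simp add: field_simps)
qed

lemma Suc_le_m_plus_mabs: "real (Suc (\<beta> i)) \<le> real (m + mabs (\<beta>::'n::finite mindex))"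
  using le_mabs[of \<beta> i] m_pos by simp

lemma rho_le_rho_incr: "rho m \<beta> \<le> rho m (incr i \<beta>)"
proof -
  have "1 \<le> real (m + mabs \<beta>) / real (Suc (\<beta> i))"
    using Suc_le_m_plus_mabs[of \<beta> i] by simp
  then have "rho m \<beta> * 1 \<le> rho m \<beta> * (real (m + mabs \<beta>) / real (Suc (\<beta> i)))"
    using rho_pos[of m \<beta>] by (intro mult_left_mono) auto
  then show ?thesis
    unfolding rho_incr by simp
qed

lemma Mzi_Hm:
  assumes "f \<in> Hm m"
  shows "Mzi i f \<in> Hm m"
proof -
  let ?g = "\<lambda>\<alpha>. (cmod (Mzi i f \<alpha>))\<^sup>2 / rho m \<alpha>"
  have "(?g \<circ> incr i) summable_on UNIV"
    unfolding o_def Mzi_incr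
  proof (rule summable_on_comparison_test)
    show "(\<lambda>\<beta>. (cmod (f \<beta>))\<^sup>2 / rho m \<beta>) summable_on UNIV"
      using assms unfolding mem_Hm_iff .
    fix \<beta> :: "'a mindex"
    show "(cmod (f \<beta>))\<^sup>2 / rho m (incr i \<beta>) \<le> (cmod (f \<beta>))\<^sup>2 / rho m \<beta>"
      using rho_pos[of m \<beta>] rho_le_rho_incr[of \<beta> i] by (intro divide_left_mono) auto
  qed (simp add: rho_pos less_imp_le)
  then have "?g summable_on range (incr i)"
    by (simp add: summable_on_reindex[OF inj_incr])
  moreover have "?g \<alpha> = 0" if "\<alpha> \<notin> range (incr i)" for \<alpha>
    using that unfolding range_incr by (simp add: Mzi_def)
  ultimately show ?thesis
    unfolding mem_Hm_iff by (rule summable_on_cong_neutral[THEN iffD1, rotated -1]) auto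
qed

text \<open>The explicit adjoint of multiplication by z_i: (M_{z_i}^* g)_\<beta> = (\<beta>_i + 1) / (m + |\<beta>|) g_{\<beta> + e_i}.\<close>
definition backshift :: "'n::finite \<Rightarrow> 'n coeffs \<Rightarrow> 'n coeffs" where
  "backshift i g = (\<lambda>\<beta>. g (incr i \<beta>) * complex_of_real (real (Suc (\<beta> i)) / real (m + mabs \<beta>)))"

lemma backshift_Hm:
  assumes "g \<in> Hm m"
  shows "backshift i g \<in> Hm m"
  unfolding mem_Hm_iff
proof (rule summable_on_comparison_test)
  let ?g = "\<lambda>\<alpha>. (cmod (g \<alpha>))\<^sup>2 / rho m \<alpha>"
  have "?g summable_on range (incr i)"
    using assms unfolding mem_Hm_iff by (rule summable_on_subset) simp
  then show "(?g \<circ> incr i) summable_on UNIV"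
    by (simp add: summable_on_reindex[OF inj_incr])
  fix \<beta> :: "'a mindex"
  define c where "c = real (Suc (\<beta> i)) / real (m + mabs \<beta>)"
  have c: "0 < c" "c \<le> 1"
    unfolding c_def using m_pos Suc_le_m_plus_mabs[of \<beta> i] by auto
  have norm_backshift: "cmod (backshift i g \<beta>) = cmod (g (incr i \<beta>)) * c"
    unfolding backshift_def c_def[symmetric] using c by (simp add: norm_mult)
  have rho: "rho m (incr i \<beta>) = rho m \<beta> / c"
    unfolding rho_incr c_def using m_pos by (simp add: field_simps)
  have "(cmod (backshift i g \<beta>))\<^sup>2 / rho m \<beta> = (cmod (g (incr i \<beta>)))\<^sup>2 / rho m (incr i \<beta>) * c"
    unfolding norm_backshift rho by (simp add: power2_eq_square)
  also have "\<dots> \<le> (?g \<circ> incr i) \<beta>"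
    unfolding o_def by (rule mult_left_le) (use c rho_pos[of m "incr i \<beta>"] in auto)
  finally show "(cmod (backshift i g \<beta>))\<^sup>2 / rho m \<beta> \<le> (?g \<circ> incr i) \<beta>" .
qed (simp add: rho_pos less_imp_le)

lemma ipH_Mzi: "ipH m (Mzi i f) g = ipH m f (backshift i g)"
proof -
  let ?h = "\<lambda>\<alpha>. Mzi i f \<alpha> * cnj (g \<alpha>) / complex_of_real (rho m \<alpha>)"
  have "ipH m (Mzi i f) g = infsum ?h (range (incr i))"
    unfolding ipH_def by (rule infsum_cong_neutral) (auto simp: range_incr Mzi_def)
  also have "\<dots> = infsum (?h \<circ> incr i) UNIV"
    by (rule infsum_reindex[OF inj_incr])
  also have "\<dots> = ipH m f (backshift i g)"
    unfolding ipH_def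
  proof (rule infsum_cong)
    fix \<beta> :: "'a mindex"
    have "real (m + mabs \<beta>) > 0"
      using m_pos by simp
    then show "(?h \<circ> incr i) \<beta> = f \<beta> * cnj (backshift i g \<beta>) / complex_of_real (rho m \<beta>)"
      using rho_pos[of m \<beta>] by (simp add: backshift_def Mzi_incr rho_incr field_simps)
  qed
  finally show ?thesis .
qed

lemma Mzi_adj_eq: "Mzi_adj m i g = (if g \<in> Hm m then backshift i g else 0)"
proof -
  have "Mzi_adj m i = (\<lambda>g. if g \<in> Hm m then backshift i g else 0)"
    unfolding Mzi_adj_def
    by (rule adj_eqI) (auto simp: backshift_Hm zero_in_Hm ipH_Mzi intro: ipH_ext)
  then show ?thesis
    by simp
qed

lemma Mz_Hm: "F \<in> Hn m \<Longrightarrow> Mz F \<in> Hm m"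
  unfolding Mz_def mem_Hn_iff by (auto intro!: Hm_sum Mzi_Hm)

definition backshifts :: "'n::finite coeffs \<Rightarrow> 'n \<Rightarrow> 'n coeffs" where
  "backshifts g = (\<lambda>i. backshift i g)"

lemma backshifts_Hn: "g \<in> Hm m \<Longrightarrow> backshifts g \<in> Hn m"
  unfolding backshifts_def mem_Hn_iff by (auto intro: backshift_Hm)

lemma ipH_Mz:
  assumes "F \<in> Hn m" "g \<in> Hm m"
  shows "ipH m (Mz F) g = ipHn m F (backshifts g)"
proof -
  have "ipH m (Mz F) g = (\<Sum>i\<in>UNIV. ipH m (Mzi i (F i)) g)"
    unfolding Mz_def using assms by (intro ipH_sum_left) (auto simp: mem_Hn_iff intro: Mzi_Hm)
  then show ?thesis
    unfolding ipHn_def backshifts_def by (simp add: ipH_Mzi)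
qed

lemma Mz_adj_eq: "Mz_adj m = (\<lambda>g. if g \<in> Hm m then backshifts g else 0)"
  unfolding Mz_adj_def
  by (rule adj_eqI) (auto simp: backshifts_Hn zero_in_Hn ipH_Mz intro: ipHn_ext)

definition delta_weight :: "'n::finite mindex \<Rightarrow> real" where
  "delta_weight \<alpha> = (if mabs \<alpha> = 0 then 1 else real (m + mabs \<alpha> - 1) / real (mabs \<alpha>))"

lemma delta_apply: "delta m f \<alpha> = complex_of_real (delta_weight \<alpha>) * f \<alpha>"
  unfolding delta_def delta_weight_def by simp

lemma delta_weight_bounds: "0 \<le> delta_weight \<alpha> \<and> delta_weight \<alpha> \<le> real m"
proof (cases "mabs \<alpha> = 0")
  case False
  then have "m + mabs \<alpha> - 1 \<le> m * mabs \<alpha>"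
    using m_pos by (cases "mabs \<alpha>") auto
  then have "real (m + mabs \<alpha> - 1) \<le> real m * real (mabs \<alpha>)"
    by (metis of_nat_le_iff of_nat_mult)
  then show ?thesis
    unfolding delta_weight_def using False by (simp add: divide_le_eq)
qed (use m_pos in \<open>simp add: delta_weight_def\<close>)

lemma delta_Hm: "f \<in> Hm m \<Longrightarrow> delta m f \<in> Hm m"
  by (rule Hm_if_dominated[where B = "real m"])
     (auto simp: delta_apply norm_mult delta_weight_bounds intro: mult_right_mono)

lemma ipH_delta: "ipH m (delta m h) g = ipH m h (delta m g)"
  unfolding ipH_def delta_apply by (simp add: ac_simps)

lemma Mz'_adj_eq: "Mz'_adj m = (\<lambda>g. if g \<in> Hm m then backshifts (delta m g) else 0)"
  unfolding Mz'_adj_def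
  by (rule adj_eqI)
     (auto simp: backshifts_Hn zero_in_Hn ipH_Mz Mz'_def ipH_delta delta_Hm Mz_Hm intro: ipHn_ext)

lemma Mzi_backshift: "Mzi i (backshift i g) \<alpha> = complex_of_real (real (\<alpha> i) / real (m + mabs \<alpha> - 1)) * g \<alpha>"
proof (cases "\<alpha> i = 0")
  case False
  let ?\<beta> = "\<alpha>(i := \<alpha> i - 1)"
  have "mabs ?\<beta> + \<alpha> i = mabs \<alpha> + (\<alpha> i - 1)"
    by (rule mabs_fun_upd)
  then have "m + mabs ?\<beta> = m + mabs \<alpha> - 1" "Suc (?\<beta> i) = \<alpha> i"
    using False by auto
  then show ?thesis
    using False incr_decr[of \<alpha> i] unfolding Mzi_def backshift_def by (simp add: mult.commute)
qed (simp add: Mzi_def)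

lemma Mz_backshifts: "Mz (backshifts g) \<alpha> = complex_of_real (real (mabs \<alpha>) / real (m + mabs \<alpha> - 1)) * g \<alpha>"
proof -
  have "Mz (backshifts g) \<alpha> = (\<Sum>i\<in>UNIV. complex_of_real (real (\<alpha> i) / real (m + mabs \<alpha> - 1)) * g \<alpha>)"
    unfolding Mz_apply backshifts_def by (simp add: Mzi_backshift)
  also have "\<dots> = complex_of_real ((\<Sum>i\<in>UNIV. real (\<alpha> i)) / real (m + mabs \<alpha> - 1)) * g \<alpha>"
    by (simp add: sum_distrib_right sum_divide_distrib)
  finally show ?thesis
    by (simp add: mabs_def)
qed

lemma delta_weight_inverse: "mabs \<alpha> \<noteq> 0 \<Longrightarrow> delta_weight \<alpha> * (real (mabs \<alpha>) / real (m + mabs \<alpha> - 1)) = 1"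
  unfolding delta_weight_def using m_pos by simp

definition nonconst_part :: "'n::finite coeffs \<Rightarrow> 'n coeffs" where
  "nonconst_part g = (\<lambda>\<alpha>. if mabs \<alpha> = 0 then 0 else g \<alpha>)"

lemma delta_Mz_backshifts: "delta m (Mz (backshifts g)) = nonconst_part g"
proof
  fix \<alpha> :: "'a mindex"
  show "delta m (Mz (backshifts g)) \<alpha> = nonconst_part g \<alpha>"
  proof (cases "mabs \<alpha> = 0")
    case False
    have "delta m (Mz (backshifts g)) \<alpha>
        = complex_of_real (delta_weight \<alpha> * (real (mabs \<alpha>) / real (m + mabs \<alpha> - 1))) * g \<alpha>"
      unfolding delta_apply Mz_backshifts by (simp add: mult.assoc)
    also have "\<dots> = g \<alpha>"
      by (subst delta_weight_inverse[OF False]) simp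
    finally show ?thesis
      using False by (simp add: nonconst_part_def)
  qed (simp add: delta_apply Mz_backshifts nonconst_part_def)
qed

lemma Mz_backshifts_delta: "Mz (backshifts (delta m g)) = nonconst_part g"
proof
  fix \<alpha> :: "'a mindex"
  show "Mz (backshifts (delta m g)) \<alpha> = nonconst_part g \<alpha>"
  proof (cases "mabs \<alpha> = 0")
    case False
    have "Mz (backshifts (delta m g)) \<alpha>
        = complex_of_real (delta_weight \<alpha> * (real (mabs \<alpha>) / real (m + mabs \<alpha> - 1))) * g \<alpha>"
      unfolding delta_apply Mz_backshifts by (simp add: ac_simps)
    also have "\<dots> = g \<alpha>"
      by (subst delta_weight_inverse[OF False]) simp
    finally show ?thesis
      using False by (simp add: nonconst_part_def)
  qed (simp add: Mz_backshifts nonconst_part_def)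
qed

lemma nonconst_part_Mz: "nonconst_part (Mz F) = Mz F"
  unfolding nonconst_part_def by (auto simp: Mz_eq_0_at_0)

lemma nonconst_part_Hhom: "g \<in> Hhom m d \<Longrightarrow> d \<noteq> 0 \<Longrightarrow> nonconst_part g = g"
  unfolding nonconst_part_def Hhom_def by auto

lemma P_ImMz_adj_eq:
  assumes G: "G \<in> Hn m"
  shows "P_ImMz_adj m G = backshifts (delta m (Mz G))"
  unfolding P_ImMz_adj_def
proof (rule orth_proj_eqI[OF G])
  let ?V = "Mz_adj m ` Hm m"
  have V: "?V \<subseteq> Hn m"
    by (auto simp: Mz_adj_eq backshifts_Hn)
  then show "hclosure (Hn m) (ipHn m) ?V \<subseteq> Hn m"
    unfolding hclosure_def by blast
  have g: "delta m (Mz G) \<in> Hm m"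
    by (rule delta_Hm[OF Mz_Hm[OF G]])
  then have "backshifts (delta m (Mz G)) \<in> ?V"
    by (force simp: Mz_adj_eq)
  moreover have "?V \<subseteq> hclosure (Hn m) (ipHn m) ?V"
    by (rule subset_hclosure[OF V]) (simp add: ipHn_def ipH_def)
  ultimately show "backshifts (delta m (Mz G)) \<in> hclosure (Hn m) (ipHn m) ?V"
    by blast
  have GV: "G - backshifts (delta m (Mz G)) \<in> Hn m"
    using G g by (intro Hn_diff backshifts_Hn)
  have "Mz (G - backshifts (delta m (Mz G))) = 0"
    unfolding Mz_diff Mz_backshifts_delta nonconst_part_Mz by simp
  then have "ipHn m (G - backshifts (delta m (Mz G))) v = 0" if "v \<in> ?V" for v
    using that GV by (auto simp: Mz_adj_eq ipH_Mz[symmetric] ipH_def)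
  then show "ipHn m (G - backshifts (delta m (Mz G))) v = 0"
    if "v \<in> hclosure (Hn m) (ipHn m) ?V" for v
    using ipHn_eq_0_on_hclosure[OF GV _ V that] by blast
qed

lemma backshift_Hhom:
  assumes "h \<in> Hhom m d"
  shows "backshift i h \<in> Hhom m (d - 1)"
proof -
  have "h (incr i \<beta>) = 0" if "mabs \<beta> \<noteq> d - 1" for \<beta>
    using assms that unfolding Hhom_def by (auto simp: mabs_incr)
  moreover have "backshift i h \<in> Hm m"
    using assms unfolding Hhom_def by (simp add: backshift_Hm)
  ultimately show ?thesis
    unfolding Hhom_def backshift_def by simp
qed

lemma Mz_backshifts_Hhom:
  assumes "h \<in> Hhom m d"
  shows "Mz (backshifts h) = (\<lambda>\<alpha>. complex_of_real (real d / real (m + d - 1)) * h \<alpha>)"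
  using assms unfolding Hhom_def by (auto simp: fun_eq_iff Mz_backshifts)

lemma Mz_fmult_backshifts:
  assumes "h \<in> Hhom m d"
  shows "Mz (\<lambda>i \<alpha>. c * fmult a (backshift i h) \<alpha>)
       = (\<lambda>\<alpha>. c * complex_of_real (real d / real (m + d - 1)) * fmult a h \<alpha>)"
proof
  fix \<alpha> :: "'a mindex"
  have "Mz (\<lambda>i \<alpha>. c * fmult a (backshift i h) \<alpha>) \<alpha> = c * fmult a (Mz (backshifts h)) \<alpha>"
    unfolding Mz_apply Mzi_scale Mzi_fmult Mz_def fmult_sum sum_fun_apply backshifts_def
    by (simp add: sum_distrib_left)
  then show "Mz (\<lambda>i \<alpha>. c * fmult a (backshift i h) \<alpha>) \<alpha>
      = c * complex_of_real (real d / real (m + d - 1)) * fmult a h \<alpha>"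
    unfolding Mz_backshifts_Hhom[OF assms] fmult_scale by simp
qed

end

section \<open>Operators satisfying the identity\<close>

definition alt_sigma_sum :: "nat \<Rightarrow> ('n::finite coeffs \<Rightarrow> 'n coeffs) \<Rightarrow> 'n coeffs \<Rightarrow> 'n coeffs" where
  "alt_sigma_sum m T = (\<lambda>f. \<Sum>j<m. (\<lambda>\<alpha>. complex_of_int ((-1) ^ j * int (m choose (j + 1)))
                                      * (sigma m ^^ j) T f \<alpha>))"

locale Hm_ball_operator = Hm_ball +
  fixes r :: nat and T :: "'n::finite coeffs \<Rightarrow> 'n coeffs"
  assumes bounded: "bounded_op m T"
    and homogeneous: "\<And>j f. f \<in> Hhom m j \<Longrightarrow> T f \<in> Hhom m (j + r)"
    and identity: "\<And>F. F \<in> Hn m \<Longrightarrow>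
      Mz'_adj m (T (Mz' m F)) = P_ImMz_adj m (oplus_op (alt_sigma_sum m T) (P_ImMz_adj m F))"
begin

lemma T_Hm: "f \<in> Hm m \<Longrightarrow> T f \<in> Hm m"
  using bounded unfolding bounded_op_def by blast

lemma T_add: "f \<in> Hm m \<Longrightarrow> g \<in> Hm m \<Longrightarrow> T (f + g) = T f + T g"
  using bounded unfolding bounded_op_def by blast

lemma T_scale: "f \<in> Hm m \<Longrightarrow> T (\<lambda>\<alpha>. c * f \<alpha>) = (\<lambda>\<alpha>. c * T f \<alpha>)"
  using bounded unfolding bounded_op_def by blast

lemma T_zero: "T 0 = 0"
  using T_scale[OF zero_in_Hm, of 0] by (simp add: zero_fun_def)

lemma T_sum: "(\<And>i. i \<in> I \<Longrightarrow> F i \<in> Hm m) \<Longrightarrow> T (\<Sum>i\<in>I. F i) = (\<Sum>i\<in>I. T (F i))"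
proof (induction I rule: infinite_finite_induct)
  case (insert x I)
  then have "T (F x + (\<Sum>i\<in>I. F i)) = T (F x) + T (\<Sum>i\<in>I. F i)"
    by (intro T_add) (auto intro: Hm_sum)
  then show ?case
    using insert by (simp only: sum.insert[OF insert(1,2)]) simp
qed (simp_all add: T_zero)

lemma T_diff: "f \<in> Hm m \<Longrightarrow> g \<in> Hm m \<Longrightarrow> T (f - g) = T f - T g"
  using T_add[of "f - g" g] by (simp add: Hm_diff)

lemma T_sqnormH_le:
  obtains C where "C \<ge> 0" "\<And>u. u \<in> Hm m \<Longrightarrow> sqnormH m (T u) \<le> C * sqnormH m u"
proof -
  obtain C where C: "\<And>u. u \<in> Hm m \<Longrightarrow> normH m (T u) \<le> C * normH m u"
    using bounded unfolding bounded_op_def by blast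
  have normH: "normH m u = sqrt (sqnormH m u)" for u
    unfolding normH_def sqnormH_def ..
  have "sqnormH m (T u) \<le> C\<^sup>2 * sqnormH m u" if u: "u \<in> Hm m" for u
  proof -
    have "sqrt (sqnormH m (T u)) \<le> C * sqrt (sqnormH m u)"
      using C[OF u] unfolding normH .
    then have "(sqrt (sqnormH m (T u)))\<^sup>2 \<le> (C * sqrt (sqnormH m u))\<^sup>2"
      using sqnormH_nonneg[of m "T u"] by (intro power_mono) auto
    then show ?thesis
      using sqnormH_nonneg[of m "T u"] sqnormH_nonneg[of m u] by (simp add: power_mult_distrib)
  qed
  then show ?thesis
    using that[of "C\<^sup>2"] by simp
qed

lemma sigma_apply: "f \<in> Hm m \<Longrightarrow> sigma m X f = Mz (\<lambda>i. X (backshift i f))"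
  unfolding sigma_def Mzi_adj_eq Mz_def by simp

lemma sigma_pow_Hm: "f \<in> Hm m \<Longrightarrow> (sigma m ^^ j) T f \<in> Hm m"
proof (induction j arbitrary: f)
  case (Suc j)
  then show ?case
    by (auto simp: sigma_apply mem_Hn_iff intro!: Mz_Hm Suc.IH backshift_Hm)
qed (simp add: T_Hm)

lemma alt_sigma_sum_Hm: "f \<in> Hm m \<Longrightarrow> alt_sigma_sum m T f \<in> Hm m"
  unfolding alt_sigma_sum_def by (auto intro!: Hm_sum Hm_scale sigma_pow_Hm)

lemma T_eq_Mz_alt_sigma_sum:
  assumes g: "g \<in> Hhom m (Suc k)"
  shows "T g = Mz (\<lambda>i. alt_sigma_sum m T (backshift i g))"
proof -
  let ?G = "\<lambda>i. alt_sigma_sum m T (backshift i g)"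
  have gH: "g \<in> Hm m"
    using g unfolding Hhom_def by simp
  have g0: "nonconst_part g = g"
    using nonconst_part_Hhom[OF g] by simp
  have F: "backshifts g \<in> Hn m"
    by (rule backshifts_Hn[OF gH])
  have G: "?G \<in> Hn m"
    unfolding mem_Hn_iff using gH by (auto intro: alt_sigma_sum_Hm backshift_Hm)
  have "backshifts (delta m (T g)) = Mz'_adj m (T g)"
    unfolding Mz'_adj_eq using T_Hm[OF gH] by simp
  also have "\<dots> = P_ImMz_adj m (oplus_op (alt_sigma_sum m T) (backshifts g))"
    using identity[OF F] unfolding Mz'_def P_ImMz_adj_eq[OF F] delta_Mz_backshifts g0 .
  also have "\<dots> = backshifts (delta m (Mz ?G))"
    unfolding oplus_op_def backshifts_def P_ImMz_adj_eq[OF G] ..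
  finally have "nonconst_part (T g) = nonconst_part (Mz ?G)"
    by (metis Mz_backshifts_delta)
  moreover have "nonconst_part (T g) = T g"
    using homogeneous[OF g] by (rule nonconst_part_Hhom) simp
  ultimately show ?thesis
    by (simp add: nonconst_part_Mz)
qed

lemma one_fun_Hhom: "(one_fun :: 'n coeffs) \<in> Hhom m 0"
proof -
  have "(one_fun :: 'n coeffs) \<in> Hm m"
    using monomial_Hm[of "\<lambda>_. 0" m] unfolding one_fun_def monomial_def .
  then show ?thesis
    unfolding Hhom_def by (auto simp: one_fun_def mabs_eq_0_iff)
qed

lemma T_one_fun_Hhom: "T one_fun \<in> Hhom m r"
  using homogeneous[OF one_fun_Hhom] by simp

lemma T_Hhom_0:
  assumes "h \<in> Hhom m 0"
  shows "T h = fmult (T one_fun) h"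
proof -
  define c where "c = h (\<lambda>_. 0)"
  have h: "h = (\<lambda>\<alpha>. c * one_fun \<alpha>)"
  proof
    fix \<alpha> :: "'n mindex"
    show "h \<alpha> = c * one_fun \<alpha>"
      using assms unfolding Hhom_def one_fun_def c_def
      by (cases "\<alpha> = (\<lambda>_. 0)") (auto simp: mabs_eq_0_iff)
  qed
  have "(one_fun :: 'n coeffs) \<in> Hm m"
    using one_fun_Hhom unfolding Hhom_def by simp
  then show ?thesis
    unfolding h by (simp add: T_scale fmult_scale fmult_one_fun)
qed

lemma sigma_pow_multiplier:
  assumes mult: "\<And>d h. d \<le> k \<Longrightarrow> h \<in> Hhom m d \<Longrightarrow> T h = fmult (T one_fun) h"
  shows "h \<in> Hhom m d \<Longrightarrow> d \<le> k + j
    \<Longrightarrow> (sigma m ^^ j) T h = (\<lambda>\<alpha>. complex_of_real (sigma_weight m j d) * fmult (T one_fun) h \<alpha>)"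
proof (induction j arbitrary: d h)
  case 0
  then show ?case
    using mult by simp
next
  case (Suc j)
  have "(sigma m ^^ Suc j) T h = Mz (\<lambda>i. (sigma m ^^ j) T (backshift i h))"
    using Suc.prems(1) unfolding Hhom_def by (simp add: sigma_apply)
  also have "\<dots> = Mz (\<lambda>i \<alpha>. complex_of_real (sigma_weight m j (d - 1)) * fmult (T one_fun) (backshift i h) \<alpha>)"
  proof -
    have "(sigma m ^^ j) T (backshift i h)
        = (\<lambda>\<alpha>. complex_of_real (sigma_weight m j (d - 1)) * fmult (T one_fun) (backshift i h) \<alpha>)" for i
      using Suc.prems by (intro Suc.IH backshift_Hhom) auto
    then show ?thesis
      by simp
  qed
  also have "\<dots> = (\<lambda>\<alpha>. complex_of_real (sigma_weight m (Suc j) d) * fmult (T one_fun) h \<alpha>)"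
    unfolding Mz_fmult_backshifts[OF Suc.prems(1)] by simp
  finally show ?case .
qed

lemma T_Hhom_Suc:
  assumes mult: "\<And>d h. d \<le> k \<Longrightarrow> h \<in> Hhom m d \<Longrightarrow> T h = fmult (T one_fun) h"
    and h: "h \<in> Hhom m (Suc k)"
  shows "T h = fmult (T one_fun) h"
proof -
  define K where "K = (\<Sum>j<m. complex_of_int ((-1) ^ j * int (m choose (j + 1)))
                               * complex_of_real (sigma_weight m j k))"
  have "alt_sigma_sum m T (backshift i h) = (\<lambda>\<alpha>. K * fmult (T one_fun) (backshift i h) \<alpha>)" for i
    using backshift_Hhom[OF h, of i]
    by (auto simp: alt_sigma_sum_def K_def sum_fun_apply sigma_pow_multiplier[OF mult]
        sum_distrib_right fun_eq_iff mult.assoc)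
  then have "T h = Mz (\<lambda>i \<alpha>. K * fmult (T one_fun) (backshift i h) \<alpha>)"
    using T_eq_Mz_alt_sigma_sum[OF h] by simp
  also have "\<dots> = (\<lambda>\<alpha>. K * complex_of_real (real (Suc k) / real (m + Suc k - 1)) * fmult (T one_fun) h \<alpha>)"
    by (rule Mz_fmult_backshifts[OF h])
  also have "K * complex_of_real (real (Suc k) / real (m + Suc k - 1)) = 1"
  proof -
    have "K * complex_of_real (real (Suc k) / real (m + Suc k - 1))
        = complex_of_real (\<Sum>j<m. (-1) ^ j * real (m choose (j + 1)) * sigma_weight m (Suc j) (Suc k))"
      unfolding K_def sum_distrib_right of_real_sum by (intro sum.cong) simp_all
    also have "\<dots> = 1"
      by (subst alternating_sigma_weight_sum[OF m_pos]) simp_all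
    finally show ?thesis .
  qed
  finally show ?thesis
    by simp
qed

lemma T_Hhom: "h \<in> Hhom m d \<Longrightarrow> T h = fmult (T one_fun) h"
proof (induction d arbitrary: h rule: less_induct)
  case (less d h)
  show ?case
  proof (cases d)
    case 0
    then show ?thesis
      using T_Hhom_0 less.prems by simp
  next
    case (Suc k)
    have mult: "T h' = fmult (T one_fun) h'" if "d' \<le> k" "h' \<in> Hhom m d'" for d' h'
      using less.IH[of d' h'] that Suc by simp
    have "h \<in> Hhom m (Suc k)"
      using less.prems Suc by simp
    then show ?thesis
      using T_Hhom_Suc[of k h] mult by blast
  qed
qed

lemma T_truncation_coeff_eq_0:
  assumes f: "f \<in> Hm m" and vanish: "\<And>\<beta>. mabs \<beta> + r = mabs \<alpha> \<Longrightarrow> f \<beta> = 0"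
  shows "T (\<lambda>\<beta>. if mabs \<beta> \<le> N then f \<beta> else 0) \<alpha> = 0"
proof -
  have "(\<lambda>\<beta>. if mabs \<beta> \<le> N then f \<beta> else 0) = (\<Sum>d\<le>N. hom_part d f)"
    by (auto simp: fun_eq_iff sum_fun_apply hom_part_def)
  then have "T (\<lambda>\<beta>. if mabs \<beta> \<le> N then f \<beta> else 0) = (\<Sum>d\<le>N. T (hom_part d f))"
    using hom_part_Hhom[OF f] unfolding Hhom_def by (simp add: T_sum)
  moreover have "T (hom_part d f) \<alpha> = 0" for d
  proof (cases "d + r = mabs \<alpha>")
    case True
    then have "hom_part d f = 0"
      using vanish by (auto simp: fun_eq_iff hom_part_def)
    then show ?thesis
      by (simp add: T_zero)
  next
    case False
    then show ?thesis
      using homogeneous[OF hom_part_Hhom[OF f]] unfolding Hhom_def by auto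
  qed
  ultimately show ?thesis
    by (simp add: sum_fun_apply)
qed

text \<open>Truncations of f agree with f in the relevant degree, and T is bounded on the remaining tail.\<close>
lemma T_coeff_eq_0:
  assumes f: "f \<in> Hm m" and vanish: "\<And>\<beta>. mabs \<beta> + r = mabs \<alpha> \<Longrightarrow> f \<beta> = 0"
  shows "T f \<alpha> = 0"
proof -
  obtain C where C0: "C \<ge> 0" and C: "\<And>u. u \<in> Hm m \<Longrightarrow> sqnormH m (T u) \<le> C * sqnormH m u"
    using T_sqnormH_le by blast
  have "(cmod (T f \<alpha>))\<^sup>2 \<le> rho m \<alpha> * C * e" if e: "e > 0" for e
  proof -
    obtain N where N: "sqnormH m (\<lambda>\<beta>. if mabs \<beta> \<le> N then 0 else f \<beta>) < e"
      using sqnormH_tail_small[OF f e] by blast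
    let ?t = "\<lambda>\<beta>. if mabs \<beta> \<le> N then f \<beta> else 0"
    have t: "?t \<in> Hm m" and tail: "f - ?t \<in> Hm m"
      using f by (auto intro: Hm_restrict Hm_diff)
    have "T f \<alpha> = T (f - ?t) \<alpha>"
      using T_diff[OF f t] T_truncation_coeff_eq_0[OF f vanish] by simp
    then have "(cmod (T f \<alpha>))\<^sup>2 / rho m \<alpha> \<le> sqnormH m (T (f - ?t))"
      using coeff_le_sqnormH[OF T_Hm[OF tail]] by simp
    also have "\<dots> \<le> C * sqnormH m (f - ?t)"
      by (rule C[OF tail])
    also have "\<dots> \<le> C * e"
    proof -
      have "f - ?t = (\<lambda>\<beta>. if mabs \<beta> \<le> N then 0 else f \<beta>)"
        by (auto simp: fun_eq_iff)
      then show ?thesis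
        using N C0 by (intro mult_left_mono) auto
    qed
    finally show ?thesis
      using rho_pos[of m \<alpha>] by (simp add: divide_le_eq ac_simps)
  qed
  then have "(cmod (T f \<alpha>))\<^sup>2 \<le> 0"
    by (rule le_0_if_le_eps)
  then show ?thesis
    by simp
qed

lemma T_eq_fmult: "f \<in> Hm m \<Longrightarrow> T f = fmult (T one_fun) f"
proof
  fix \<alpha> :: "'n mindex"
  assume f: "f \<in> Hm m"
  have symbol: "\<And>\<beta>. mabs \<beta> \<noteq> r \<Longrightarrow> T one_fun \<beta> = 0"
    using T_one_fun_Hhom unfolding Hhom_def by simp
  show "T f \<alpha> = fmult (T one_fun) f \<alpha>"
  proof (cases "mabs \<alpha> < r")
    case True
    then show ?thesis
      using T_coeff_eq_0[OF f] fmult_eq_0_below[OF symbol] by simp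
  next
    case False
    let ?h = "hom_part (mabs \<alpha> - r) f"
    have h: "?h \<in> Hm m"
      using hom_part_Hhom[OF f] unfolding Hhom_def by simp
    have "T (f - ?h) \<alpha> = 0"
      using False by (intro T_coeff_eq_0 Hm_diff f h) (auto simp: hom_part_def)
    then have "T f \<alpha> = T ?h \<alpha>"
      using T_diff[OF f h] by simp
    also have "\<dots> = fmult (T one_fun) f \<alpha>"
      using T_Hhom[OF hom_part_Hhom[OF f]] fmult_hom_part[OF symbol] by simp
    finally show ?thesis .
  qed
qed

end

theorem theorem3:
  fixes m r :: nat and T :: "'n::finite coeffs \<Rightarrow> 'n coeffs"
  assumes "m \<ge> 1"
    and "bounded_op m T"
    and "\<forall>j. \<forall>f\<in>Hhom m j. T f \<in> Hhom m (j + r)"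
    and "\<forall>F\<in>Hn m. Mz'_adj m (T (Mz' m F)) =
           P_ImMz_adj m (oplus_op (\<lambda>f. \<Sum>j<m. (\<lambda>\<alpha>. complex_of_int ((-1) ^ j * int (m choose (j + 1)))
                                      * (sigma m ^^ j) T f \<alpha>)) (P_ImMz_adj m F))"
  shows "\<forall>f\<in>Hm m. T f = fmult (T one_fun) f"
proof -
  interpret Hm_ball_operator m r T
    by unfold_locales (use assms in \<open>auto simp: alt_sigma_sum_def\<close>)
  show ?thesis
    using T_eq_fmult by blast
qed

end
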